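(* Let $k\geq 2$ and let $G$ be a graph of order $n\geq 11k-4$ that does not contain $k\cdot P_3$ as a subgraph. Then $\lambda_n(G)\geq -\sqrt{(k-1)(n-k+1)}$, with equality if and only if $G=K_{k-1,n-k+1}$.
   Context: Graphs are finite and simple; $\lambda_n(G)$ denotes the least eigenvalue of the adjacency matrix of $G$. $P_3$ is the path on 3 vertices and $k\cdot P_3$ is the disjoint union of $k$ copies of $P_3$. $K_{a,b}$ is the complete bipartite graph with parts of sizes $a$ and $b$. *)

theory Defs
  imports "HOL-Analysis.Analysis"
begin

definition simple_graph :: "('a \<Rightarrow> 'a \<Rightarrow> bool) \<Rightarrow> bool" where
  "simple_graph E \<longleftrightarrow> (\<forall>x y. E x y \<longrightarrow> E y x) \<and> (\<forall>x. \<not> E x x)"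

definition adj_matrix :: "('a::finite \<Rightarrow> 'a \<Rightarrow> bool) \<Rightarrow> real^'a^'a" where
  "adj_matrix E = (\<chi> i j. if E i j then 1 else 0)"

definition is_eigenvalue :: "real^'n^'n \<Rightarrow> real \<Rightarrow> bool" where
  "is_eigenvalue A \<mu> \<longleftrightarrow> (\<exists>v. v \<noteq> 0 \<and> A *v v = \<mu> *\<^sub>R v)"

definition least_eig :: "('a::finite \<Rightarrow> 'a \<Rightarrow> bool) \<Rightarrow> real" where
  "least_eig E = Min {\<mu>. is_eigenvalue (adj_matrix E) \<mu>}"

definition contains_kP3 :: "('a \<Rightarrow> 'a \<Rightarrow> bool) \<Rightarrow> nat \<Rightarrow> bool" where
  "contains_kP3 E k \<longleftrightarrow> (\<exists>f :: nat \<times> nat \<Rightarrow> 'a.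
     inj_on f ({0..<k} \<times> {0..<3}) \<and>
     (\<forall>i<k. E (f (i,0)) (f (i,1)) \<and> E (f (i,1)) (f (i,2))))"

definition Kab_edge :: "nat \<Rightarrow> nat \<Rightarrow> nat \<Rightarrow> nat \<Rightarrow> bool" where
  "Kab_edge a b x y \<longleftrightarrow> x < a + b \<and> y < a + b \<and> ((x < a) \<noteq> (y < a))"

definition is_Kab :: "('a \<Rightarrow> 'a \<Rightarrow> bool) \<Rightarrow> nat \<Rightarrow> nat \<Rightarrow> bool" where
  "is_Kab E a b \<longleftrightarrow> (\<exists>f. bij_betw f (UNIV :: 'a set) {0..<a+b} \<and>
      (\<forall>x y. E x y \<longleftrightarrow> Kab_edge a b (f x) (f y)))"

end

theory Submission
  imports Defs
begin

text \<open>
  Let \<open>x\<close> be an eigenvector for an eigenvalue \<open>\<lambda>\<close> and split the vertices by the sign of \<open>x\<close>.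
  Edges inside the positive or the negative part contribute nonnegatively to \<open>x\<^sup>T A x\<close>, and by
  Cauchy-Schwarz and AM-GM the \<open>m\<close> edges between the parts contribute at least
  \<open>-sqrt m |x|\<^sup>2\<close>; hence \<open>\<lambda> \<ge> -sqrt m\<close>. These \<open>m\<close> edges form a bipartite graph without
  \<open>k P\<^sub>3\<close>, and for \<open>n \<ge> 11k - 4\<close> such a graph has at most \<open>(k-1)(n-k+1)\<close> edges: by induction
  on \<open>k\<close>, either a vertex of degree \<open>\<ge> 3k + 2\<close> can be deleted, or all degrees are small and a
  maximal packing of paths leaves only a matching outside it.

  In the case of equality every estimate is tight: all edges join the two parts, every positive
  vertex is adjacent to every negative one, and since a complete bipartite graph with parts of
  sizes at least \<open>k\<close> and \<open>2k\<close> contains \<open>k P\<^sub>3\<close>, the part sizes must be \<open>k - 1\<close> and \<open>n - k + 1\<close>.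
\<close>

section \<open>Packings of paths of length two\<close>

definition degree_in :: "'a set \<Rightarrow> ('a \<Rightarrow> 'a \<Rightarrow> bool) \<Rightarrow> 'a \<Rightarrow> nat" where
  "degree_in V H u = card {w \<in> V. H u w}"

definition packing_vertices :: "nat \<Rightarrow> (nat \<times> nat \<Rightarrow> 'a) \<Rightarrow> 'a set" where
  "packing_vertices j f = f ` ({0..<j} \<times> {0..<3})"

definition P3_packing :: "'a set \<Rightarrow> ('a \<Rightarrow> 'a \<Rightarrow> bool) \<Rightarrow> nat \<Rightarrow> (nat \<times> nat \<Rightarrow> 'a) \<Rightarrow> bool" where
  "P3_packing V H j f \<longleftrightarrow> inj_on f ({0..<j} \<times> {0..<3}) \<and> packing_vertices j f \<subseteq> V \<and>
     (\<forall>i<j. H (f (i,0)) (f (i,1)) \<and> H (f (i,1)) (f (i,2)))"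

lemma contains_kP3_iff_P3_packing: "contains_kP3 E k \<longleftrightarrow> (\<exists>f. P3_packing UNIV E k f)"
  unfolding contains_kP3_def P3_packing_def by simp

lemma P3_packing_mono: "P3_packing V H j f \<Longrightarrow> V \<subseteq> W \<Longrightarrow> P3_packing W H j f"
  unfolding P3_packing_def by blast

lemma P3_packing_subgraph:
  "P3_packing V H k f \<Longrightarrow> (\<And>u v. H u v \<Longrightarrow> E u v) \<Longrightarrow> P3_packing V E k f"
  unfolding P3_packing_def by blast

lemma P3_packing_0: "P3_packing V H 0 f"
  unfolding P3_packing_def packing_vertices_def by simp

lemma finite_packing_vertices: "finite (packing_vertices j f)"
  unfolding packing_vertices_def by simp

lemma card_packing_vertices: "P3_packing V H j f \<Longrightarrow> card (packing_vertices j f) = 3 * j"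
  unfolding P3_packing_def packing_vertices_def by (simp add: card_image card_cartesian_product)

lemma P3_packing_Suc:
  assumes f: "P3_packing V H j f"
    and new: "{a, c, b} \<subseteq> V - packing_vertices j f" "distinct [a, c, b]"
    and edges: "H a c" "H c b"
  shows "P3_packing V H (Suc j) (f((j,0) := a, (j,1) := c, (j,2) := b))"
proof -
  define g where "g = f((j,0) := a, (j,1) := c, (j,2) := b)"
  let ?old = "{0..<j} \<times> {0..<3::nat}" and ?new = "{(j,0), (j,1), (j,2::nat)}"
  have dom: "{0..<Suc j} \<times> {0..<3} = ?old \<union> ?new"
    by auto
  have g_old: "g ` ?old = packing_vertices j f"
    unfolding g_def packing_vertices_def by (auto simp: image_iff)
  have "inj_on g ?old"
    using f unfolding P3_packing_def by (subst inj_on_cong[where g = f]) (auto simp: g_def)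
  moreover have "inj_on g ?new"
    using new(2) by (auto simp: g_def inj_on_def)
  moreover have "g ` ?new = {a, c, b}"
    by (simp add: g_def)
  ultimately have "inj_on g (?old \<union> ?new)"
    using new(1) g_old by (auto simp: inj_on_Un)
  moreover have "packing_vertices (Suc j) g \<subseteq> V"
    using f new(1) g_old unfolding P3_packing_def packing_vertices_def dom by (auto simp: g_def)
  moreover have "\<forall>i<Suc j. H (g (i,0)) (g (i,1)) \<and> H (g (i,1)) (g (i,2))"
    using f edges unfolding P3_packing_def by (auto simp: g_def less_Suc_eq)
  ultimately show ?thesis
    unfolding P3_packing_def g_def[symmetric] dom by blast
qed

lemma P3_packing_Suc_if_two_neighbours:
  assumes H: "simple_graph H" and f: "P3_packing V H j f"
    and c: "c \<in> V - packing_vertices j f"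
    and two: "2 \<le> degree_in (V - packing_vertices j f) H c"
  shows "\<exists>g. P3_packing V H (Suc j) g"
proof -
  let ?N = "{w \<in> V - packing_vertices j f. H c w}"
  have "\<not> card ?N \<le> Suc 0"
    using two by (simp add: degree_in_def)
  then obtain a b where ab: "a \<in> ?N" "b \<in> ?N" "a \<noteq> b"
    using card_le_Suc0_iff_eq[of ?N] by (cases "finite ?N") auto
  have "H a c" "H c b" "a \<noteq> c" "c \<noteq> b"
    using ab H unfolding simple_graph_def by auto
  then show ?thesis
    using P3_packing_Suc[OF f, of a c b] ab c by auto
qed

lemma maximal_P3_packing:
  assumes "\<not> (\<exists>f. P3_packing V H k f)"
  obtains t f where "t < k" "P3_packing V H t f" "\<not> (\<exists>g. P3_packing V H (Suc t) g)"
proof -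
  have "\<exists>t<k. \<exists>f. P3_packing V H t f \<and> \<not> (\<exists>g. P3_packing V H (Suc t) g)"
  proof (rule ccontr)
    assume extendable: "\<not> ?thesis"
    have "t \<le> k \<Longrightarrow> \<exists>f. P3_packing V H t f" for t
      by (induction t) (use P3_packing_0 extendable in \<open>auto simp: Suc_le_eq\<close>)
    then show False
      using assms by blast
  qed
  then show ?thesis
    using that by blast
qed

lemma no_P3_packing_remove_vertex:
  assumes H: "simple_graph H" and v: "v \<in> V" and deg: "3 * j + 2 \<le> degree_in V H v"
    and no_packing: "\<not> (\<exists>f. P3_packing V H (Suc j) f)"
  shows "\<not> (\<exists>f. P3_packing (V - {v}) H j f)"
proof
  assume "\<exists>f. P3_packing (V - {v}) H j f"
  then obtain f where f: "P3_packing (V - {v}) H j f" ..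
  let ?S = "packing_vertices j f"
  have fV: "P3_packing V H j f"
    using P3_packing_mono[OF f] by blast
  have "{w \<in> V - ?S. H v w} = {w \<in> V. H v w} - ?S"
    by auto
  then have "degree_in V H v - card ?S \<le> degree_in (V - ?S) H v"
    using diff_card_le_card_Diff[OF finite_packing_vertices] by (simp add: degree_in_def)
  then have "2 \<le> degree_in (V - ?S) H v"
    using deg card_packing_vertices[OF f] by linarith
  moreover have "v \<in> V - ?S"
    using f v unfolding P3_packing_def by auto
  ultimately show False
    using P3_packing_Suc_if_two_neighbours[OF H fV] no_packing by blast
qed

lemma degree_outside_maximal_P3_packing:
  assumes H: "simple_graph H" and f: "P3_packing V H t f"
    and maximal: "\<not> (\<exists>g. P3_packing V H (Suc t) g)"
    and r: "r \<in> V - packing_vertices t f"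
  shows "degree_in (V - packing_vertices t f) H r \<le> 1"
proof (rule ccontr)
  assume "\<not> ?thesis"
  then show False
    using P3_packing_Suc_if_two_neighbours[OF H f r] maximal by simp
qed

section \<open>Bipartite graphs without \<open>k P\<^sub>3\<close>\<close>

definition bipartite :: "'a set \<Rightarrow> ('a \<Rightarrow> 'a \<Rightarrow> bool) \<Rightarrow> bool" where
  "bipartite X H \<longleftrightarrow> simple_graph H \<and> (\<forall>u w. H u w \<longrightarrow> (u \<in> X \<longleftrightarrow> w \<notin> X))"

definition cross_edges :: "'a set \<Rightarrow> 'a set \<Rightarrow> ('a \<Rightarrow> 'a \<Rightarrow> bool) \<Rightarrow> ('a \<times> 'a) set" where
  "cross_edges V X H = {(u,w). u \<in> V \<inter> X \<and> w \<in> V - X \<and> H u w}"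

definition edges_at :: "'a set \<Rightarrow> 'a set \<Rightarrow> ('a \<Rightarrow> 'a \<Rightarrow> bool) \<Rightarrow> 'a \<Rightarrow> ('a \<times> 'a) set" where
  "edges_at V X H v = {(u,w) \<in> cross_edges V X H. u = v \<or> w = v}"

lemma finite_cross_edges: "finite V \<Longrightarrow> finite (cross_edges V X H)"
  by (rule finite_subset[of _ "V \<times> V"]) (auto simp: cross_edges_def)

lemma finite_edges_at: "finite V \<Longrightarrow> finite (edges_at V X H v)"
  by (rule finite_subset[OF _ finite_cross_edges]) (auto simp: edges_at_def)

lemma card_edges_at:
  assumes V: "finite V" and H: "bipartite X H" and v: "v \<in> V"
  shows "card (edges_at V X H v) = degree_in V H v"
proof (cases "v \<in> X")
  case True
  then have "edges_at V X H v = (\<lambda>w. (v,w)) ` {w \<in> V. H v w}"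
    using H v unfolding edges_at_def cross_edges_def bipartite_def by auto
  then show ?thesis
    unfolding degree_in_def by (simp add: card_image inj_on_def)
next
  case False
  then have "edges_at V X H v = (\<lambda>u. (u,v)) ` {w \<in> V. H v w}"
    using H v unfolding edges_at_def cross_edges_def bipartite_def simple_graph_def by auto
  then show ?thesis
    unfolding degree_in_def by (simp add: card_image inj_on_def)
qed

lemma card_cross_edges_remove_vertex:
  assumes V: "finite V" and H: "bipartite X H" and v: "v \<in> V"
  shows "card (cross_edges V X H) = card (cross_edges (V - {v}) X H) + degree_in V H v"
proof -
  have "cross_edges V X H = cross_edges (V - {v}) X H \<union> edges_at V X H v"
    and "cross_edges (V - {v}) X H \<inter> edges_at V X H v = {}"
    unfolding edges_at_def cross_edges_def by auto
  then have "card (cross_edges V X H) = card (cross_edges (V - {v}) X H) + card (edges_at V X H v)"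
    by (simp add: card_Un_disjoint V finite_cross_edges finite_edges_at)
  then show ?thesis
    using card_edges_at[OF V H v] by simp
qed

lemma card_cross_edges_le_product:
  assumes "finite V"
  shows "card (cross_edges V X H) \<le> card (V \<inter> X) * card (V - X)"
proof -
  have "card (cross_edges V X H) \<le> card ((V \<inter> X) \<times> (V - X))"
    by (rule card_mono) (auto simp: assms cross_edges_def)
  then show ?thesis
    by (simp add: card_cartesian_product)
qed

lemma card_cross_edges_le_sides_if_degree_le_one:
  assumes V: "finite V" and H: "bipartite X H" and deg: "\<forall>r \<in> V. degree_in V H r \<le> 1"
  shows "card (cross_edges V X H) \<le> card (V \<inter> X)" and "card (cross_edges V X H) \<le> card (V - X)"
proof -
  have unique: "w = w'" if "w \<in> V" "w' \<in> V" "H r w" "H r w'" "r \<in> V" for r w w'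
    using deg that card_le_Suc0_iff_eq[of "{w \<in> V. H r w}"] V unfolding degree_in_def by auto
  have unique': "w = w'" if "w \<in> V" "w' \<in> V" "H w r" "H w' r" "r \<in> V" for r w w'
    using unique that H unfolding bipartite_def simple_graph_def by blast
  have "inj_on fst (cross_edges V X H)"
    by (rule inj_onI) (auto simp: cross_edges_def intro: unique)
  then have "card (cross_edges V X H) = card (fst ` cross_edges V X H)"
    by (simp add: card_image)
  also have "\<dots> \<le> card (V \<inter> X)"
    by (rule card_mono) (auto simp: V cross_edges_def)
  finally show "card (cross_edges V X H) \<le> card (V \<inter> X)" .
  have "inj_on snd (cross_edges V X H)"
    by (rule inj_onI) (auto simp: cross_edges_def intro: unique')
  then have "card (cross_edges V X H) = card (snd ` cross_edges V X H)"
    by (simp add: card_image)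
  also have "\<dots> \<le> card (V - X)"
    by (rule card_mono) (auto simp: V cross_edges_def)
  finally show "card (cross_edges V X H) \<le> card (V - X)" .
qed

lemma card_edges_at_P3_le:
  assumes V: "finite V" and H: "bipartite X H" and abc: "a \<in> V" "c \<in> V" "b \<in> V"
    and edges: "H a c" "H c b"
  shows "card (edges_at V X H a \<union> edges_at V X H c \<union> edges_at V X H b) + 2
    \<le> degree_in V H a + degree_in V H c + degree_in V H b"
proof -
  have shared: "edges_at V X H u \<inter> edges_at V X H w \<noteq> {}" if "H u w" "u \<in> V" "w \<in> V" for u w
  proof -
    have "(u, w) \<in> edges_at V X H u \<inter> edges_at V X H w \<or> (w, u) \<in> edges_at V X H u \<inter> edges_at V X H w"
      using that H unfolding bipartite_def simple_graph_def edges_at_def cross_edges_def by auto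
    then show ?thesis
      by blast
  qed
  let ?A = "edges_at V X H a" and ?C = "edges_at V X H c" and ?B = "edges_at V X H b"
  have fin: "finite ?A" "finite ?B" "finite ?C"
    using V by (simp_all add: finite_edges_at)
  have "1 \<le> card (?A \<inter> ?C)"
    using shared[OF edges(1) abc(1,2)] fin by (simp add: Suc_le_eq card_gt_0_iff)
  moreover have "1 \<le> card ((?A \<union> ?C) \<inter> ?B)"
    using shared[OF edges(2) abc(2,3)] fin by (auto simp: Suc_le_eq card_gt_0_iff)
  moreover have "card (?A \<union> ?C) + card (?A \<inter> ?C) = card ?A + card ?C"
    using card_Un_Int[of ?A ?C] fin by simp
  moreover have "card (?A \<union> ?C \<union> ?B) + card ((?A \<union> ?C) \<inter> ?B) = card (?A \<union> ?C) + card ?B"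
    using card_Un_Int[of "?A \<union> ?C" ?B] fin by simp
  ultimately show ?thesis
    using card_edges_at[OF V H abc(1)] card_edges_at[OF V H abc(2)] card_edges_at[OF V H abc(3)]
    by linarith
qed

lemma low_degree_arith:
  fixes k n t e c :: nat
  assumes k: "2 \<le> k" and t: "t < k" and n: "11 * k - 4 \<le> n"
    and e: "e \<le> t * (9 * k - 8) + c" and c: "2 * c \<le> n - 3 * t" and tn: "3 * t \<le> n"
  shows "e \<le> (k - 1) * (n - k + 1)"
proof -
  define m where "m = k - 2"
  define d where "d = n - (11 * m + 18)"
  have m: "k = m + 2"
    using k by (simp add: m_def)
  have d: "n = 11 * m + 18 + d"
    using n m by (simp add: d_def)
  have tm: "t * (18 * m + 17) \<le> (m + 1) * (18 * m + 17)"
    using t m by (intro mult_right_mono) simp_all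
  have "2 * e \<le> 2 * t * (9 * m + 10) + 2 * c"
    using e m by (simp add: algebra_simps)
  also have "\<dots> \<le> 2 * t * (9 * m + 10) + (11 * m + 18 + d - 3 * t)"
    using c d by simp
  also have "\<dots> = t * (18 * m + 17) + (11 * m + 18 + d)"
    using tn d by (simp add: algebra_simps)
  also have "\<dots> \<le> (m + 1) * (18 * m + 17) + (11 * m + 18 + d)"
    using tm by simp
  also have "\<dots> \<le> 2 * ((m + 1) * (10 * m + 17 + d)) + 1"
    by (simp add: algebra_simps)
  finally have "e \<le> (m + 1) * (10 * m + 17 + d)"
    by linarith
  then show ?thesis
    using m d by (simp add: algebra_simps)
qed

lemma card_cross_edges_le_packing:
  assumes V: "finite V"
  shows "card (cross_edges V X H) \<le> (\<Sum>i<t. card (edges_at V X H (f (i,0)) \<union> edges_at V X H (f (i,1))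
      \<union> edges_at V X H (f (i,2)))) + card (cross_edges (V - packing_vertices t f) X H)"
proof -
  define T where "T i = edges_at V X H (f (i,0)) \<union> edges_at V X H (f (i,1)) \<union> edges_at V X H (f (i,2))"
    for i
  let ?R = "V - packing_vertices t f"
  have "cross_edges V X H \<subseteq> (\<Union>i<t. T i) \<union> cross_edges ?R X H"
  proof
    fix p assume p: "p \<in> cross_edges V X H"
    show "p \<in> (\<Union>i<t. T i) \<union> cross_edges ?R X H"
    proof (cases "fst p \<in> packing_vertices t f \<or> snd p \<in> packing_vertices t f")
      case True
      then obtain i e where "i < t" "e < 3" "fst p = f (i,e) \<or> snd p = f (i,e)"
        unfolding packing_vertices_def by auto
      moreover have "e = 0 \<or> e = 1 \<or> e = 2"
        using \<open>e < 3\<close> by auto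
      ultimately show ?thesis
        using p unfolding T_def edges_at_def by auto
    next
      case False
      then show ?thesis
        using p unfolding cross_edges_def by auto
    qed
  qed
  then have "card (cross_edges V X H) \<le> card ((\<Union>i<t. T i) \<union> cross_edges ?R X H)"
    by (rule card_mono[rotated]) (simp add: T_def V finite_edges_at finite_cross_edges)
  also have "\<dots> \<le> (\<Sum>i<t. card (T i)) + card (cross_edges ?R X H)"
    using card_Un_le[of "\<Union>i<t. T i" "cross_edges ?R X H"] card_UN_le[of "{..<t}" T] by simp
  finally show ?thesis
    unfolding T_def .
qed

lemma card_cross_edges_low_degree:
  assumes V: "finite V" and H: "bipartite X H" and k: "2 \<le> k" and n: "11 * k - 4 \<le> card V"
    and no_packing: "\<not> (\<exists>f. P3_packing V H k f)" and low: "\<forall>u \<in> V. degree_in V H u \<le> 3 * k - 2"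
  shows "card (cross_edges V X H) \<le> (k - 1) * (card V - k + 1)"
proof -
  have simple: "simple_graph H"
    using H unfolding bipartite_def by blast
  obtain t f where t: "t < k" and f: "P3_packing V H t f"
    and maximal: "\<not> (\<exists>g. P3_packing V H (Suc t) g)"
    using maximal_P3_packing[OF no_packing] by blast
  define R where "R = V - packing_vertices t f"
  have S: "packing_vertices t f \<subseteq> V" "card (packing_vertices t f) = 3 * t"
    using f card_packing_vertices[OF f] unfolding P3_packing_def by auto
  have R: "finite R" "card R = card V - 3 * t"
    using V S finite_subset[OF S(1) V] unfolding R_def by (simp_all add: card_Diff_subset)
  have path_edges: "card (edges_at V X H (f (i,0)) \<union> edges_at V X H (f (i,1)) \<union> edges_at V X H (f (i,2)))
      \<le> 9 * k - 8" if "i < t" for i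
  proof -
    have path: "f (i,0) \<in> V" "f (i,1) \<in> V" "f (i,2) \<in> V" "H (f (i,0)) (f (i,1))" "H (f (i,1)) (f (i,2))"
      using f that unfolding P3_packing_def packing_vertices_def by auto
    then have "degree_in V H (f (i,0)) \<le> 3 * k - 2" "degree_in V H (f (i,1)) \<le> 3 * k - 2"
      "degree_in V H (f (i,2)) \<le> 3 * k - 2"
      using low by blast+
    then show ?thesis
      using card_edges_at_P3_le[OF V H path] k by linarith
  qed
  have "\<forall>r \<in> R. degree_in R H r \<le> 1"
    using degree_outside_maximal_P3_packing[OF simple f maximal] unfolding R_def by blast
  then have "2 * card (cross_edges R X H) \<le> card (R \<inter> X) + card (R - X)"
    using card_cross_edges_le_sides_if_degree_le_one[OF R(1) H] by fastforce
  also have "\<dots> = card V - 3 * t"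
    using card_Int_Diff[OF R(1)] R(2) by simp
  finally have outside: "2 * card (cross_edges R X H) \<le> card V - 3 * t" .
  have "card (cross_edges V X H) \<le> t * (9 * k - 8) + card (cross_edges R X H)"
    using card_cross_edges_le_packing[OF V, where X=X and H=H and t=t and f=f] sum_mono[OF path_edges, of "{..<t}"]
    unfolding R_def by fastforce
  then show ?thesis
    using low_degree_arith[OF k t n _ outside] S(2) card_mono[OF V S(1)] by simp
qed

lemma degree_le_card_other_side:
  assumes V: "finite V" and H: "bipartite X H"
  shows "v \<in> X \<Longrightarrow> degree_in V H v \<le> card (V - X)"
    and "v \<notin> X \<Longrightarrow> degree_in V H v \<le> card (V \<inter> X)"
  using H V unfolding bipartite_def degree_in_def by (auto intro!: card_mono)

lemma card_cross_edges_P3_free_2: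
  assumes V: "finite V" and H: "bipartite X H" and n: "18 \<le> card V"
    and no_packing: "\<not> (\<exists>f. P3_packing V H 2 f)"
  shows "card (cross_edges V X H) \<le> card V - 1"
proof (cases "\<exists>v \<in> V. 5 \<le> degree_in V H v")
  case True
  then obtain v where v: "v \<in> V" and deg: "5 \<le> degree_in V H v"
    by blast
  let ?W = "V - {v}"
  have simple: "simple_graph H"
    using H unfolding bipartite_def by blast
  have "\<not> (\<exists>f. P3_packing ?W H 1 f)"
    using no_P3_packing_remove_vertex[OF simple v, of 1] deg no_packing by (simp add: numeral_2_eq_2)
  \<comment> \<open>so the empty packing is maximal in \<open>?W\<close>\<close>
  then have "\<forall>r \<in> ?W. degree_in ?W H r \<le> 1"
    using degree_outside_maximal_P3_packing[OF simple P3_packing_0[of ?W H "\<lambda>_. v"]]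
    by (simp add: packing_vertices_def)
  then have W: "card (cross_edges ?W X H) \<le> card (?W \<inter> X)" "card (cross_edges ?W X H) \<le> card (?W - X)"
    using card_cross_edges_le_sides_if_degree_le_one[of ?W X H] V H by auto
  have "card (cross_edges V X H) = card (cross_edges ?W X H) + degree_in V H v"
    by (rule card_cross_edges_remove_vertex[OF V H v])
  also have "\<dots> \<le> card (?W \<inter> X) + card (?W - X)"
  proof (cases "v \<in> X")
    case True
    then have "?W - X = V - X"
      by auto
    then show ?thesis
      using W(1) degree_le_card_other_side(1)[OF V H True] by simp
  next
    case False
    then have "?W \<inter> X = V \<inter> X"
      by auto
    then show ?thesis
      using W(2) degree_le_card_other_side(2)[OF V H False] by simp
  qed
  also have "\<dots> = card V - 1"
    using card_Int_Diff[of ?W X] V v by simp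
  finally show ?thesis .
next
  case False
  then have "\<forall>u \<in> V. degree_in V H u \<le> 3 * 2 - 2"
    by auto
  then show ?thesis
    using card_cross_edges_low_degree[OF V H _ _ no_packing] n by simp
qed

lemma mult_diff_le_mult_diff:
  fixes s k n :: nat
  assumes "s \<le> k" "k + s \<le> n"
  shows "s * (n - s) \<le> k * (n - k)"
proof -
  obtain d r where d: "k = s + d" and r: "n = k + s + r"
    using assms le_Suc_ex by metis
  have "s * (n - s) = s * (s + d + r)"
    using d r by simp
  also have "\<dots> \<le> (s + d) * (s + r)"
    by (simp add: algebra_simps)
  also have "\<dots> = k * (n - k)"
    using d r by simp
  finally show ?thesis .
qed

lemma mult_diff_less_mult_diff:
  fixes s k n :: nat
  assumes "s < k" "k + s < n"
  shows "s * (n - s) < k * (n - k)"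
proof -
  obtain d r where d: "k = s + Suc d" and r: "n = k + s + Suc r"
    using assms less_imp_Suc_add by (metis add_Suc_right)
  have "s * (n - s) = s * (s + Suc d + Suc r)"
    using d r by simp
  also have "\<dots> < (s + Suc d) * (s + Suc r)"
    by (simp add: algebra_simps)
  also have "\<dots> = k * (n - k)"
    using d r by simp
  finally show ?thesis .
qed

lemma card_cross_edges_le_if_large_degree:
  assumes V: "finite V" and H: "bipartite X H" and v: "v \<in> V"
    and large: "card V - k < degree_in V H v" and n: "2 * k \<le> card V"
  shows "card (cross_edges V X H) \<le> k * (card V - k)"
proof -
  obtain s s' where s: "s + s' = card V" "degree_in V H v \<le> s'"
    and prod: "card (V \<inter> X) * card (V - X) = s * s'"
  proof (cases "v \<in> X")
    case True
    then show ?thesis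
      using that card_Int_Diff[OF V, of X] degree_le_card_other_side(1)[OF V H] by simp
  next
    case False
    then show ?thesis
      using that[of "card (V - X)" "card (V \<inter> X)"] card_Int_Diff[OF V, of X]
        degree_le_card_other_side(2)[OF V H] by (simp add: mult.commute)
  qed
  have "card (cross_edges V X H) \<le> s * (card V - s)"
    using card_cross_edges_le_product[OF V, of X H] prod s(1) by (simp flip: s(1))
  also have "\<dots> \<le> k * (card V - k)"
    using large s n by (intro mult_diff_le_mult_diff) auto
  finally show ?thesis .
qed

lemma card_cross_edges_P3_free_Suc:
  assumes k: "2 \<le> k"
    and IH: "\<And>W. finite W \<Longrightarrow> 11 * k - 4 \<le> card W \<Longrightarrow> \<not> (\<exists>f. P3_packing W H k f) \<Longrightarrow>
      card (cross_edges W X H) \<le> (k - 1) * (card W - k + 1)"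
    and V: "finite V" and H: "bipartite X H" and n: "11 * Suc k - 4 \<le> card V"
    and no_packing: "\<not> (\<exists>f. P3_packing V H (Suc k) f)"
  shows "card (cross_edges V X H) \<le> k * (card V - k)"
proof (cases "\<exists>v \<in> V. 3 * k + 2 \<le> degree_in V H v")
  case True
  then obtain v where v: "v \<in> V" and deg: "3 * k + 2 \<le> degree_in V H v"
    by blast
  have simple: "simple_graph H"
    using H unfolding bipartite_def by blast
  have W: "finite (V - {v})" "11 * k - 4 \<le> card (V - {v})" "card (V - {v}) - k + 1 = card V - k"
    using V v n by auto
  have "card (cross_edges (V - {v}) X H) \<le> (k - 1) * (card V - k)"
    using IH[OF W(1,2) no_P3_packing_remove_vertex[OF simple v deg no_packing]] unfolding W(3) .
  then have removed: "card (cross_edges V X H) \<le> (k - 1) * (card V - k) + degree_in V H v"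
    using card_cross_edges_remove_vertex[OF V H v] by simp
  show ?thesis
  proof (cases "degree_in V H v \<le> card V - k")
    case True
    have "(k - 1) * (card V - k) + (card V - k) = k * (card V - k)"
      using k by (cases k) auto
    then show ?thesis
      using removed True by simp
  next
    case False
    then show ?thesis
      using card_cross_edges_le_if_large_degree[OF V H v] n by simp
  qed
next
  case False
  then have "\<forall>u \<in> V. degree_in V H u \<le> 3 * Suc k - 2"
    by auto
  then have "card (cross_edges V X H) \<le> (Suc k - 1) * (card V - Suc k + 1)"
    using card_cross_edges_low_degree[OF V H _ n no_packing] k by simp
  also have "\<dots> = k * (card V - k)"
    using n by (simp add: Suc_diff_Suc)
  finally show ?thesis .
qed

theorem card_cross_edges_P3_free:
  assumes "2 \<le> k" "finite V" "bipartite X H" "11 * k - 4 \<le> card V"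
    and "\<not> (\<exists>f. P3_packing V H k f)"
  shows "card (cross_edges V X H) \<le> (k - 1) * (card V - k + 1)"
  using assms
proof (induction k arbitrary: V rule: nat_induct_at_least)
  case base
  then have "card (cross_edges V X H) \<le> card V - 1"
    by (intro card_cross_edges_P3_free_2) simp_all
  then show ?case
    using base.prems by simp
next
  case (Suc k)
  then have "card (cross_edges V X H) \<le> k * (card V - k)"
    by (intro card_cross_edges_P3_free_Suc[of k H X V]) simp_all
  also have "\<dots> = (Suc k - 1) * (card V - Suc k + 1)"
    using Suc.prems by (simp add: Suc_diff_Suc)
  finally show ?case .
qed

section \<open>The quadratic form of a graph\<close>

definition quad_form :: "('a::finite \<Rightarrow> 'a \<Rightarrow> bool) \<Rightarrow> ('a \<Rightarrow> real) \<Rightarrow> real" where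
  "quad_form E f = (\<Sum>i\<in>UNIV. \<Sum>j\<in>UNIV. if E i j then f i * f j else 0)"

definition pos_neg_edges :: "('a \<Rightarrow> 'a \<Rightarrow> bool) \<Rightarrow> ('a \<Rightarrow> real) \<Rightarrow> ('a \<times> 'a) set" where
  "pos_neg_edges E f = {(u,w). 0 < f u \<and> f w < 0 \<and> E u w}"

definition cross_weight :: "('a \<Rightarrow> 'a \<Rightarrow> bool) \<Rightarrow> ('a \<Rightarrow> real) \<Rightarrow> real" where
  "cross_weight E f = (\<Sum>(u,w)\<in>pos_neg_edges E f. f u * - f w)"

lemma quad_form_eq_sum_edges: "quad_form E f = (\<Sum>(i,j)\<in>{(i,j). E i j}. f i * f j)"
proof -
  have "quad_form E f = (\<Sum>(i,j)\<in>UNIV. if E i j then f i * f j else 0)"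
    unfolding quad_form_def by (simp add: sum.cartesian_product)
  also have "\<dots> = (\<Sum>(i,j)\<in>{(i,j). E i j}. f i * f j)"
    by (rule sum.mono_neutral_cong_right) (auto split: if_splits)
  finally show ?thesis .
qed

lemma quad_form_split:
  assumes sym: "\<And>u v. E u v \<Longrightarrow> E v u"
  shows "quad_form E f = quad_form (\<lambda>u v. E u v \<and> 0 \<le> f u * f v) f - 2 * cross_weight E f"
proof -
  let ?pn = "pos_neg_edges E f"
  have edges: "{(i,j). E i j} = {(i,j). E i j \<and> 0 \<le> f i * f j} \<union> (?pn \<union> prod.swap ` ?pn)"
    using sym by (auto simp: pos_neg_edges_def zero_le_mult_iff not_le mult_less_0_iff)
  have "(\<Sum>(i,j)\<in>prod.swap ` ?pn. f i * f j) = (\<Sum>(i,j)\<in>?pn. f i * f j)"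
    by (subst sum.reindex) (auto simp: inj_on_def mult.commute)
  moreover have "?pn \<inter> prod.swap ` ?pn = {}"
    by (auto simp: pos_neg_edges_def)
  ultimately have "(\<Sum>(i,j)\<in>?pn \<union> prod.swap ` ?pn. f i * f j) = - 2 * cross_weight E f"
    by (simp add: sum.union_disjoint cross_weight_def case_prod_unfold sum_negf)
  moreover have "{(i,j). E i j \<and> 0 \<le> f i * f j} \<inter> (?pn \<union> prod.swap ` ?pn) = {}"
    by (auto simp: pos_neg_edges_def zero_le_mult_iff)
  ultimately show ?thesis
    unfolding quad_form_eq_sum_edges edges by (simp add: sum.union_disjoint)
qed

lemma quad_form_same_sign_edges_nonneg: "0 \<le> quad_form (\<lambda>u v. E u v \<and> 0 \<le> f u * f v) f"
  unfolding quad_form_def by (intro sum_nonneg) simp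

lemma sum_squares_split_sign:
  fixes f :: "'a::finite \<Rightarrow> real"
  shows "(\<Sum>i\<in>UNIV. (f i)\<^sup>2) = (\<Sum>i\<in>{i. 0 < f i}. (f i)\<^sup>2) + (\<Sum>i\<in>{i. f i < 0}. (f i)\<^sup>2)"
proof -
  have "(\<Sum>i\<in>UNIV. (f i)\<^sup>2) = (\<Sum>i\<in>{i. 0 < f i} \<union> {i. f i < 0}. (f i)\<^sup>2)"
    by (rule sum.mono_neutral_right) auto
  also have "\<dots> = (\<Sum>i\<in>{i. 0 < f i}. (f i)\<^sup>2) + (\<Sum>i\<in>{i. f i < 0}. (f i)\<^sup>2)"
    by (rule sum.union_disjoint) auto
  finally show ?thesis .
qed

lemma sum_pos_neg_edges_le_product:
  fixes E :: "'a::finite \<Rightarrow> 'a \<Rightarrow> bool" and f :: "'a \<Rightarrow> real"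
  defines "P \<equiv> {i. 0 < f i}" and "N \<equiv> {i. f i < 0}"
  shows "(\<Sum>(u,w)\<in>pos_neg_edges E f. (f u)\<^sup>2 * (f w)\<^sup>2) \<le> (\<Sum>u\<in>P. (f u)\<^sup>2) * (\<Sum>w\<in>N. (f w)\<^sup>2)"
    and "(\<Sum>(u,w)\<in>pos_neg_edges E f. (f u)\<^sup>2 * (f w)\<^sup>2) = (\<Sum>u\<in>P. (f u)\<^sup>2) * (\<Sum>w\<in>N. (f w)\<^sup>2)
      \<Longrightarrow> pos_neg_edges E f = P \<times> N"
proof -
  define h where "h = (\<lambda>(u,w). (f u)\<^sup>2 * (f w :: real)\<^sup>2)"
  have sub: "pos_neg_edges E f \<subseteq> P \<times> N"
    unfolding pos_neg_edges_def P_def N_def by auto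
  have pos: "0 < h p" if "p \<in> P \<times> N" for p
    using that unfolding h_def P_def N_def by auto
  have product: "sum h (P \<times> N) = (\<Sum>u\<in>P. (f u)\<^sup>2) * (\<Sum>w\<in>N. (f w)\<^sup>2)"
    unfolding h_def by (simp add: sum_product sum.cartesian_product)
  have split: "sum h (P \<times> N) = sum h (P \<times> N - pos_neg_edges E f) + sum h (pos_neg_edges E f)"
    by (rule sum.subset_diff[OF sub]) simp
  moreover have "0 \<le> sum h (P \<times> N - pos_neg_edges E f)"
    using pos by (intro sum_nonneg) (auto intro: less_imp_le)
  ultimately show "(\<Sum>(u,w)\<in>pos_neg_edges E f. (f u)\<^sup>2 * (f w)\<^sup>2) \<le> (\<Sum>u\<in>P. (f u)\<^sup>2) * (\<Sum>w\<in>N. (f w)\<^sup>2)"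
    using product unfolding h_def by simp
  assume "(\<Sum>(u,w)\<in>pos_neg_edges E f. (f u)\<^sup>2 * (f w)\<^sup>2) = (\<Sum>u\<in>P. (f u)\<^sup>2) * (\<Sum>w\<in>N. (f w)\<^sup>2)"
  then have "sum h (P \<times> N - pos_neg_edges E f) = 0"
    using split product unfolding h_def by simp
  then have "P \<times> N - pos_neg_edges E f = {}"
    using sum_pos[of "P \<times> N - pos_neg_edges E f" h] pos by fastforce
  then show "pos_neg_edges E f = P \<times> N"
    using sub by blast
qed

lemma cross_weight_sq_le:
  fixes E :: "'a::finite \<Rightarrow> 'a \<Rightarrow> bool" and f :: "'a \<Rightarrow> real"
  shows "(2 * cross_weight E f)\<^sup>2 \<le> card (pos_neg_edges E f) * (\<Sum>i\<in>UNIV. (f i)\<^sup>2)\<^sup>2"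
    and "0 < card (pos_neg_edges E f) \<Longrightarrow>
      (2 * cross_weight E f)\<^sup>2 = card (pos_neg_edges E f) * (\<Sum>i\<in>UNIV. (f i)\<^sup>2)\<^sup>2 \<Longrightarrow>
      pos_neg_edges E f = {i. 0 < f i} \<times> {i. f i < 0}"
proof -
  define m where "m = real (card (pos_neg_edges E f))"
  define C where "C = (\<Sum>(u,w)\<in>pos_neg_edges E f. (f u)\<^sup>2 * (f w)\<^sup>2)"
  define A where "A = (\<Sum>u\<in>{i. 0 < f i}. (f u)\<^sup>2)"
  define B where "B = (\<Sum>w\<in>{i. f i < 0}. (f w)\<^sup>2)"
  have "(cross_weight E f)\<^sup>2 = (\<Sum>p\<in>pos_neg_edges E f. 1 * (f (fst p) * - f (snd p)))\<^sup>2"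
    unfolding cross_weight_def by (simp add: case_prod_unfold)
  also have "\<dots> \<le> (\<Sum>p\<in>pos_neg_edges E f. 1\<^sup>2) * (\<Sum>p\<in>pos_neg_edges E f. (f (fst p) * - f (snd p))\<^sup>2)"
    by (rule Cauchy_Schwarz_ineq_sum)
  finally have CS: "(2 * cross_weight E f)\<^sup>2 \<le> m * (4 * C)"
    unfolding m_def C_def by (simp add: power_mult_distrib case_prod_unfold)
  have CAB: "m * (4 * C) \<le> m * (4 * (A * B))"
    using sum_pos_neg_edges_le_product(1)[where E=E and f=f] unfolding A_def B_def C_def m_def
    by (intro mult_left_mono) simp_all
  have "4 * (A * B) \<le> (A + B)\<^sup>2"
    using zero_le_power2[of "A - B"] unfolding power2_eq_square by (simp add: algebra_simps)
  also have "(A + B)\<^sup>2 = (\<Sum>i\<in>UNIV. (f i)\<^sup>2)\<^sup>2"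
    unfolding sum_squares_split_sign[of f] A_def B_def ..
  finally have AMGM: "m * (4 * (A * B)) \<le> m * (\<Sum>i\<in>UNIV. (f i)\<^sup>2)\<^sup>2"
    unfolding m_def by (intro mult_left_mono) simp_all
  show "(2 * cross_weight E f)\<^sup>2 \<le> card (pos_neg_edges E f) * (\<Sum>i\<in>UNIV. (f i)\<^sup>2)\<^sup>2"
    using CS CAB AMGM unfolding m_def by linarith
  assume "0 < card (pos_neg_edges E f)"
    and "(2 * cross_weight E f)\<^sup>2 = card (pos_neg_edges E f) * (\<Sum>i\<in>UNIV. (f i)\<^sup>2)\<^sup>2"
  then have "0 < m" "m * (4 * C) = m * (4 * (A * B))"
    using CS CAB AMGM unfolding m_def by linarith+
  then have "C = A * B"
    by simp
  then show "pos_neg_edges E f = {i. 0 < f i} \<times> {i. f i < 0}"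
    using sum_pos_neg_edges_le_product(2)[where E=E and f=f] unfolding A_def B_def C_def by blast
qed

lemma two_cross_weight_le:
  fixes E :: "'a::finite \<Rightarrow> 'a \<Rightarrow> bool" and f :: "'a \<Rightarrow> real"
  shows "2 * cross_weight E f \<le> sqrt (card (pos_neg_edges E f)) * (\<Sum>i\<in>UNIV. (f i)\<^sup>2)"
proof (rule power2_le_imp_le)
  show "(2 * cross_weight E f)\<^sup>2 \<le> (sqrt (card (pos_neg_edges E f)) * (\<Sum>i\<in>UNIV. (f i)\<^sup>2))\<^sup>2"
    using cross_weight_sq_le(1)[of E f] by (simp add: power_mult_distrib)
qed (simp add: sum_nonneg)

lemma quad_form_lower_bound:
  fixes E :: "'a::finite \<Rightarrow> 'a \<Rightarrow> bool" and f :: "'a \<Rightarrow> real"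
  assumes sym: "\<And>u v. E u v \<Longrightarrow> E v u" and M: "card (pos_neg_edges E f) \<le> M"
  shows "- sqrt M * (\<Sum>i\<in>UNIV. (f i)\<^sup>2) \<le> quad_form E f"
proof -
  have "sqrt (card (pos_neg_edges E f)) * (\<Sum>i\<in>UNIV. (f i)\<^sup>2) \<le> sqrt M * (\<Sum>i\<in>UNIV. (f i)\<^sup>2)"
    using M by (intro mult_right_mono) (simp_all add: sum_nonneg)
  then show ?thesis
    using two_cross_weight_le[of E f] quad_form_split[of E f, OF sym] quad_form_same_sign_edges_nonneg[of E f]
    by linarith
qed

lemma quad_form_eq_lower_boundD:
  fixes E :: "'a::finite \<Rightarrow> 'a \<Rightarrow> bool" and f :: "'a \<Rightarrow> real"
  assumes sym: "\<And>u v. E u v \<Longrightarrow> E v u" and M: "card (pos_neg_edges E f) \<le> M" "0 < M"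
    and nonzero: "\<exists>i. f i \<noteq> 0"
    and eq: "quad_form E f = - sqrt M * (\<Sum>i\<in>UNIV. (f i)\<^sup>2)"
  shows "card (pos_neg_edges E f) = M"
    and "pos_neg_edges E f = {i. 0 < f i} \<times> {i. f i < 0}"
    and "\<And>u v. E u v \<Longrightarrow> f u * f v \<le> 0"
proof -
  let ?m = "card (pos_neg_edges E f)" and ?T = "\<Sum>i\<in>UNIV. (f i)\<^sup>2"
  let ?Q = "quad_form (\<lambda>u v. E u v \<and> 0 \<le> f u * f v) f"
  have T: "0 < ?T"
    using nonzero by (auto intro: sum_pos2)
  have "sqrt ?m * ?T \<le> sqrt M * ?T"
    using M T by (simp add: mult_right_mono)
  then have Q: "?Q = 0" and sqrt_eq: "sqrt ?m * ?T = sqrt M * ?T"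
    and cw: "2 * cross_weight E f = sqrt ?m * ?T"
    using quad_form_split[of E f, OF sym] quad_form_same_sign_edges_nonneg[of E f] two_cross_weight_le[of E f] eq
    by linarith+
  show m: "?m = M"
    using sqrt_eq T by simp
  show "pos_neg_edges E f = {i. 0 < f i} \<times> {i. f i < 0}"
    using cross_weight_sq_le(2)[of E f] cw m M(2) by (simp add: power_mult_distrib)
  fix u v assume "E u v"
  have "\<forall>(i,j) \<in> {(i,j). E i j \<and> 0 \<le> f i * f j}. f i * f j = 0"
    using Q sum_nonneg_eq_0_iff[of "{(i,j). E i j \<and> 0 \<le> f i * f j}" "\<lambda>(i,j). f i * f j"]
    unfolding quad_form_eq_sum_edges by fastforce
  then show "f u * f v \<le> 0"
    using \<open>E u v\<close> by fastforce
qed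

lemma card_pos_neg_edges_P3_free:
  fixes E :: "'a::finite \<Rightarrow> 'a \<Rightarrow> bool" and f :: "'a \<Rightarrow> real"
  assumes E: "simple_graph E" and k: "2 \<le> k" and n: "11 * k - 4 \<le> CARD('a)"
    and no_kP3: "\<not> contains_kP3 E k"
  shows "card (pos_neg_edges E f) \<le> (k - 1) * (CARD('a) - k + 1)"
proof -
  define H where "H u w \<longleftrightarrow> E u w \<and> (0 < f u \<and> f w < 0 \<or> f u < 0 \<and> 0 < f w)" for u w
  define X where "X = {i. 0 < f i}"
  have "bipartite X H"
    using E unfolding bipartite_def simple_graph_def H_def X_def by auto
  moreover have "\<not> (\<exists>g. P3_packing UNIV H k g)"
    using no_kP3 P3_packing_subgraph[of UNIV H k _ E] unfolding contains_kP3_iff_P3_packing H_def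
    by blast
  moreover have "cross_edges UNIV X H = pos_neg_edges E f"
    unfolding cross_edges_def pos_neg_edges_def H_def X_def by auto
  ultimately show ?thesis
    using card_cross_edges_P3_free[OF k _ _ n, of X H] by simp
qed

section \<open>Complete bipartite graphs\<close>

lemma contains_kP3_if_complete_bipartite:
  fixes E :: "'a::finite \<Rightarrow> 'a \<Rightarrow> bool"
  assumes AB: "A \<inter> B = {}" and A: "k \<le> card A" and B: "2 * k \<le> card B"
    and edges: "\<And>a b. a \<in> A \<Longrightarrow> b \<in> B \<Longrightarrow> E a b \<and> E b a"
  shows "contains_kP3 E k"
proof -
  obtain c where c: "c ` {0..<k} \<subseteq> A" "inj_on c {0..<k}"
    using card_le_inj[of "{0..<k}" A] A by auto
  obtain l where l: "l ` {0..<2 * k} \<subseteq> B" "inj_on l {0..<2 * k}"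
    using card_le_inj[of "{0..<2 * k}" B] B by auto
  \<comment> \<open>the \<open>i\<close>-th path is \<open>l (2i), c i, l (2i + 1)\<close>\<close>
  define f where "f p = (if snd p = 1 then c (fst p) else l (2 * fst p + snd p div 2))" for p :: "nat \<times> nat"
  have "inj_on f ({0..<k} \<times> {0..<3})"
  proof (rule inj_onI)
    fix p p' assume "p \<in> {0..<k} \<times> {0..<3}" "p' \<in> {0..<k} \<times> {0..<3}" "f p = f p'"
    moreover obtain i e i' e' where p: "p = (i, e)" "p' = (i', e')"
      by fastforce
    ultimately have ie: "i < k" "e < 3" "i' < k" "e' < 3" and eq: "f (i, e) = f (i', e')"
      by auto
    have idx: "2 * i + e div 2 < 2 * k" "2 * i' + e' div 2 < 2 * k"
      using ie by auto
    then have "l (2 * i + e div 2) \<in> B" "l (2 * i' + e' div 2) \<in> B"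
      using l(1) by auto
    then have "c i \<in> A" "c i' \<in> A" "l (2 * i + e div 2) \<notin> A" "l (2 * i' + e' div 2) \<notin> A"
      using ie c(1) AB by auto
    then have "(e = 1 \<and> e' = 1 \<and> i = i') \<or> (e \<noteq> 1 \<and> e' \<noteq> 1 \<and> 2 * i + e div 2 = 2 * i' + e' div 2)"
      using eq ie idx c(2) l(2) by (auto simp: f_def inj_on_eq_iff split: if_splits)
    then show "p = p'"
    proof
      assume e: "e \<noteq> 1 \<and> e' \<noteq> 1 \<and> 2 * i + e div 2 = 2 * i' + e' div 2"
      then have "e = 0 \<or> e = 2" "e' = 0 \<or> e' = 2"
        using ie by auto
      then show ?thesis
        using e p by auto presburger+
    qed (use p in auto)
  qed
  moreover have "\<forall>i<k. E (f (i,0)) (f (i,1)) \<and> E (f (i,1)) (f (i,2))"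
    using c l edges by (auto simp: f_def image_subset_iff)
  ultimately show ?thesis
    unfolding contains_kP3_def by blast
qed

lemma is_Kab_iff_partition:
  fixes E :: "'a::finite \<Rightarrow> 'a \<Rightarrow> bool"
  shows "is_Kab E a b \<longleftrightarrow> (\<exists>A. card A = a \<and> card (- A) = b \<and> (\<forall>u v. E u v \<longleftrightarrow> (u \<in> A) \<noteq> (v \<in> A)))"
proof
  assume "is_Kab E a b"
  then obtain F where F: "bij_betw F UNIV {0..<a+b}" and edges: "\<forall>x y. E x y \<longleftrightarrow> Kab_edge a b (F x) (F y)"
    unfolding is_Kab_def by blast
  define A where "A = F -` {0..<a}"
  have range: "range F = {0..<a+b}"
    using F by (simp add: bij_betw_def)
  have "F ` A = {0..<a}" "F ` (- A) = {a..<a+b}"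
    unfolding A_def vimage_Compl[symmetric] image_vimage_eq range by auto
  then have "card A = a" "card (- A) = b"
    using bij_betw_same_card[OF bij_betw_subset[OF F]] by fastforce+
  moreover have "\<forall>u v. E u v \<longleftrightarrow> (u \<in> A) \<noteq> (v \<in> A)"
    using edges range unfolding Kab_edge_def A_def by auto
  ultimately show "\<exists>A. card A = a \<and> card (- A) = b \<and> (\<forall>u v. E u v \<longleftrightarrow> (u \<in> A) \<noteq> (v \<in> A))"
    by blast
next
  assume "\<exists>A. card A = a \<and> card (- A) = b \<and> (\<forall>u v. E u v \<longleftrightarrow> (u \<in> A) \<noteq> (v \<in> A))"
  then obtain A where A: "card A = a" "card (- A) = b" and edges: "\<forall>u v. E u v \<longleftrightarrow> (u \<in> A) \<noteq> (v \<in> A)"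
    by blast
  obtain g where g: "bij_betw g A {0..<a}"
    using finite_same_card_bij[of A "{0..<a}"] A by auto
  obtain h where h: "bij_betw h (- A) {a..<a+b}"
    using finite_same_card_bij[of "- A" "{a..<a+b}"] A by auto
  define F where "F u = (if u \<in> A then g u else h u)" for u
  have "bij_betw F A {0..<a}"
    using g by (rule bij_betw_cong[THEN iffD1, rotated]) (simp add: F_def)
  moreover have "bij_betw F (- A) {a..<a+b}"
    using h by (rule bij_betw_cong[THEN iffD1, rotated]) (simp add: F_def)
  ultimately have "bij_betw F (A \<union> - A) ({0..<a} \<union> {a..<a+b})"
    by (rule bij_betw_combine) auto
  then have F: "bij_betw F UNIV {0..<a+b}"
    by (simp add: ivl_disj_un_two(3))
  have "F u < a \<longleftrightarrow> u \<in> A" "F u < a + b" for u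
    using bij_betwE[OF g] bij_betwE[OF h] unfolding F_def by force+
  then have "\<forall>x y. E x y \<longleftrightarrow> Kab_edge a b (F x) (F y)"
    using edges unfolding Kab_edge_def by blast
  then show "is_Kab E a b"
    using F unfolding is_Kab_def by blast
qed

lemma product_eq_small_side:
  fixes p q K n :: nat
  assumes "p \<le> K" "p + q \<le> n" "p * q = K * (n - K)" "0 < K" "2 * K < n"
  shows "p = K \<and> q = n - K"
proof -
  have "p = K"
  proof (rule ccontr)
    assume "p \<noteq> K"
    then have "p * (n - p) < K * (n - K)"
      using assms by (intro mult_diff_less_mult_diff) auto
    moreover have "p * q \<le> p * (n - p)"
      using assms by (intro mult_left_mono) simp_all
    ultimately show False
      using assms by linarith
  qed
  then show ?thesis
    using assms by simp
qed

lemma extremal_part_sizes: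
  fixes k n p q :: nat
  assumes k: "2 \<le> k" and n: "11 * k - 4 \<le> n"
    and prod: "p * q = (k - 1) * (n - k + 1)" and sum: "p + q \<le> n"
    and no_kP3: "\<not> (k \<le> p \<and> 2 * k \<le> q)" "\<not> (k \<le> q \<and> 2 * k \<le> p)"
  shows "p = k - 1 \<and> q = n - k + 1 \<or> q = k - 1 \<and> p = n - k + 1"
proof -
  define m where "m = k - 2"
  define d where "d = n - (11 * m + 18)"
  have m: "k = m + 2"
    using k by (simp add: m_def)
  have d: "n = 11 * m + 18 + d"
    using n m by (simp add: d_def)
  have K: "k - 1 = m + 1" "n - k + 1 = n - (m + 1)" "2 * (m + 1) < n" "0 < m + 1"
    using m d by auto
  have prod': "p * q = (m + 1) * (n - (m + 1))" "q * p = (m + 1) * (n - (m + 1))"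
    using prod unfolding K(1,2) by (simp_all add: mult.commute)
  consider "p \<le> m + 1" | "q \<le> m + 1" | "p \<le> 2 * m + 3" "q \<le> 2 * m + 3"
    using no_kP3 m by linarith
  then show ?thesis
  proof cases
    case 1
    then show ?thesis
      using product_eq_small_side[OF 1 sum prod'(1) K(4,3)] unfolding K(1,2) by blast
  next
    case 2
    then show ?thesis
      using product_eq_small_side[OF 2 _ prod'(2) K(4,3)] sum unfolding K(1,2) by (simp add: add.commute)
  next
    case 3
    then have "p * q \<le> (2 * m + 3) * (2 * m + 3)"
      by (intro mult_mono) auto
    also have "\<dots> < (m + 1) * (10 * m + 17 + d)"
      by (simp add: algebra_simps)
    finally show ?thesis
      using prod m d by simp
  qed
qed

lemma sign_class_sizes_if_extremal:
  fixes E :: "'a::finite \<Rightarrow> 'a \<Rightarrow> bool" and f :: "'a \<Rightarrow> real"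
  assumes E: "simple_graph E" and k: "2 \<le> k" and n: "11 * k - 4 \<le> CARD('a)"
    and no_kP3: "\<not> contains_kP3 E k"
    and complete: "pos_neg_edges E f = {i. 0 < f i} \<times> {i. f i < 0}"
    and card: "card (pos_neg_edges E f) = (k - 1) * (CARD('a) - k + 1)"
  defines "P \<equiv> {i. 0 < f i}" and "N \<equiv> {i. f i < 0}"
  shows "card P = k - 1 \<and> card N = CARD('a) - k + 1 \<or> card N = k - 1 \<and> card P = CARD('a) - k + 1"
proof -
  have PN: "P \<inter> N = {}" "N \<inter> P = {}"
    unfolding P_def N_def by auto
  have PN_edges: "E a b \<and> E b a" "E b a \<and> E a b" if "a \<in> P" "b \<in> N" for a b
    using that complete E unfolding P_def N_def pos_neg_edges_def simple_graph_def by blast+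
  have "card P * card N = (k - 1) * (CARD('a) - k + 1)"
    using card complete unfolding P_def N_def by (simp add: card_cartesian_product)
  moreover have "card P + card N \<le> CARD('a)"
    using PN by (simp add: card_Un_disjoint[symmetric] card_mono)
  moreover have "\<not> (k \<le> card P \<and> 2 * k \<le> card N)" "\<not> (k \<le> card N \<and> 2 * k \<le> card P)"
    using contains_kP3_if_complete_bipartite[OF PN(1), of k E] contains_kP3_if_complete_bipartite[OF PN(2), of k E]
      PN_edges no_kP3 by blast+
  ultimately show ?thesis
    by (rule extremal_part_sizes[OF k n])
qed

lemma is_Kab_if_extremal:
  fixes E :: "'a::finite \<Rightarrow> 'a \<Rightarrow> bool" and f :: "'a \<Rightarrow> real"
  assumes E: "simple_graph E" and k: "2 \<le> k" and n: "11 * k - 4 \<le> CARD('a)"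
    and no_kP3: "\<not> contains_kP3 E k"
    and complete: "pos_neg_edges E f = {i. 0 < f i} \<times> {i. f i < 0}"
    and card: "card (pos_neg_edges E f) = (k - 1) * (CARD('a) - k + 1)"
    and crossing: "\<And>u v. E u v \<Longrightarrow> f u * f v \<le> 0"
  shows "is_Kab E (k - 1) (CARD('a) - k + 1)"
proof -
  define P where "P = {i. 0 < f i}"
  define N where "N = {i. f i < 0}"
  have sizes: "card P = k - 1 \<and> card N = CARD('a) - k + 1 \<or> card N = k - 1 \<and> card P = CARD('a) - k + 1"
    using sign_class_sizes_if_extremal[OF E k n no_kP3 complete card] unfolding P_def N_def .
  have "P \<inter> N = {}"
    unfolding P_def N_def by auto
  moreover from this have "card (P \<union> N) = CARD('a)"
    using sizes k n by (simp add: card_Un_disjoint) arith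
  then have "P \<union> N = UNIV"
    by (intro card_subset_eq) simp_all
  ultimately have compl: "- P = N" "- N = P"
    by auto
  have edges: "E u v \<longleftrightarrow> (u \<in> P) \<noteq> (v \<in> P)" for u v
  proof
    assume "E u v"
    then have "\<not> 0 < f u * f v"
      using crossing by (simp add: not_less)
    then show "(u \<in> P) \<noteq> (v \<in> P)"
      using compl(1) unfolding P_def N_def by (auto simp: zero_less_mult_iff)
  next
    assume "(u \<in> P) \<noteq> (v \<in> P)"
    then show "E u v"
      using complete E compl(1) unfolding P_def N_def pos_neg_edges_def simple_graph_def by blast
  qed
  show ?thesis
    unfolding is_Kab_iff_partition
  proof (cases "card P = k - 1")
    case True
    then show "\<exists>A. card A = k - 1 \<and> card (- A) = CARD('a) - k + 1 \<and> (\<forall>u v. E u v \<longleftrightarrow> (u \<in> A) \<noteq> (v \<in> A))"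
      using sizes compl edges by (intro exI[of _ P]) auto
  next
    case False
    then show "\<exists>A. card A = k - 1 \<and> card (- A) = CARD('a) - k + 1 \<and> (\<forall>u v. E u v \<longleftrightarrow> (u \<in> A) \<noteq> (v \<in> A))"
      using sizes compl edges by (intro exI[of _ N]) auto
  qed
qed

section \<open>Eigenvalues of symmetric matrices\<close>

lemma inner_mult_symmetric_matrix:
  fixes M :: "real^'n^'n"
  assumes "transpose M = M"
  shows "x \<bullet> (M *v y) = (M *v x) \<bullet> y"
  by (metis assms dot_lmul_matrix transpose_matrix_vector)

lemma linear_coeff_zero_if_nonneg:
  fixes a c :: real
  assumes nonneg: "\<And>t. 0 \<le> t * a + t\<^sup>2 * c"
  shows "a = 0"
proof (rule ccontr)
  assume "a \<noteq> 0"
  define t where "t = - a / (\<bar>c\<bar> + 1)"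
  have "t \<noteq> 0"
    using \<open>a \<noteq> 0\<close> unfolding t_def by (simp add: add_nonneg_eq_0_iff)
  have "t * (\<bar>c\<bar> + 1) = - a"
    unfolding t_def by (simp add: add_pos_nonneg)
  then have "t\<^sup>2 * (\<bar>c\<bar> + 1) = - t * a"
    by (simp add: power2_eq_square mult.assoc)
  moreover have "t\<^sup>2 * c \<le> t\<^sup>2 * \<bar>c\<bar>"
    by (simp add: mult_left_mono)
  ultimately have "t * a + t\<^sup>2 * c \<le> - t\<^sup>2"
    by (simp add: algebra_simps)
  moreover have "0 < t\<^sup>2"
    using \<open>t \<noteq> 0\<close> by simp
  ultimately show False
    using nonneg[of t] by linarith
qed

lemma eigenvector_if_rayleigh_minimizer:
  fixes M :: "real^'n^'n" and x :: "real^'n"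
  assumes sym: "transpose M = M" and unit: "x \<bullet> x = 1"
    and min: "\<And>y. (x \<bullet> (M *v x)) * (y \<bullet> y) \<le> y \<bullet> (M *v y)"
  shows "M *v x = (x \<bullet> (M *v x)) *\<^sub>R x"
proof -
  define \<mu> where "\<mu> = x \<bullet> (M *v x)"
  define w where "w = M *v x - \<mu> *\<^sub>R x"
  have xw: "x \<bullet> (M *v w) = w \<bullet> (M *v x)"
    using inner_mult_symmetric_matrix[OF sym] by (simp add: inner_commute)
  have ww: "w \<bullet> (M *v x) = w \<bullet> w + \<mu> * (w \<bullet> x)"
    unfolding w_def by (simp add: inner_commute algebra_simps)
  have "(x + t *\<^sub>R w) \<bullet> (M *v (x + t *\<^sub>R w)) - \<mu> * ((x + t *\<^sub>R w) \<bullet> (x + t *\<^sub>R w))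
      = t * (2 * (w \<bullet> w)) + t\<^sup>2 * (w \<bullet> (M *v w) - \<mu> * (w \<bullet> w))" for t
    using xw ww unit \<mu>_def
    by (simp add: matrix_vector_right_distrib inner_commute power2_eq_square algebra_simps)
  \<comment> \<open>minimality of the Rayleigh quotient at \<open>x\<close> kills the first-order term in \<open>t\<close>\<close>
  then have "0 \<le> t * (2 * (w \<bullet> w)) + t\<^sup>2 * (w \<bullet> (M *v w) - \<mu> * (w \<bullet> w))" for t
    using min[of "x + t *\<^sub>R w"] unfolding \<mu>_def by (metis diff_ge_0_iff_ge)
  then have "w \<bullet> w = 0"
    using linear_coeff_zero_if_nonneg by fastforce
  then show ?thesis
    unfolding w_def \<mu>_def by simp
qed

lemma symmetric_matrix_has_eigenvalue:
  fixes M :: "real^'n^'n"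
  assumes sym: "transpose M = M"
  shows "\<exists>\<mu>. is_eigenvalue M \<mu>"
proof -
  let ?q = "\<lambda>x::real^'n. x \<bullet> (M *v x)"
  have "axis undefined 1 \<in> sphere (0::real^'n) 1"
    by simp
  moreover have "continuous_on (sphere 0 1) ?q"
    by (intro continuous_intros)
  ultimately obtain x where x: "x \<in> sphere 0 1" and min_x: "\<And>y. y \<in> sphere 0 1 \<Longrightarrow> ?q x \<le> ?q y"
    using continuous_attains_inf[OF compact_sphere, of 0 1 ?q] by blast
  have unit: "x \<bullet> x = 1"
    using x by (simp add: dot_square_norm)
  have "?q x * (y \<bullet> y) \<le> ?q y" for y
  proof (cases "y = 0")
    case False
    then have "?q x \<le> ?q (y /\<^sub>R norm y)"
      by (intro min_x) simp
    also have "\<dots> = ?q y / (y \<bullet> y)"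
      by (simp add: matrix_vector_mult_scaleR dot_square_norm power2_eq_square field_simps)
    finally show ?thesis
      using False by (simp add: pos_le_divide_eq)
  qed simp
  then have "M *v x = ?q x *\<^sub>R x"
    by (rule eigenvector_if_rayleigh_minimizer[OF sym unit])
  moreover have "x \<noteq> 0"
    using x by auto
  ultimately show ?thesis
    unfolding is_eigenvalue_def by blast
qed

lemma finite_eigenvalues_symmetric_matrix:
  fixes M :: "real^'n^'n"
  assumes sym: "transpose M = M"
  shows "finite {\<mu>. is_eigenvalue M \<mu>}"
proof -
  let ?L = "{\<mu>. is_eigenvalue M \<mu>}"
  define v where "v \<mu> = (SOME x. x \<noteq> 0 \<and> M *v x = \<mu> *\<^sub>R x)" for \<mu>
  have v: "v \<mu> \<noteq> 0" "M *v v \<mu> = \<mu> *\<^sub>R v \<mu>" if "\<mu> \<in> ?L" for \<mu>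
    using someI_ex[of "\<lambda>x. x \<noteq> 0 \<and> M *v x = \<mu> *\<^sub>R x"] that
    unfolding v_def is_eigenvalue_def by auto
  have orth: "v \<mu> \<bullet> v \<nu> = 0" if "\<mu> \<in> ?L" "\<nu> \<in> ?L" "\<mu> \<noteq> \<nu>" for \<mu> \<nu>
  proof -
    have "\<mu> * (v \<mu> \<bullet> v \<nu>) = \<nu> * (v \<mu> \<bullet> v \<nu>)"
      using inner_mult_symmetric_matrix[OF sym, of "v \<mu>" "v \<nu>"] v that by simp
    then show ?thesis
      using that by simp
  qed
  then have inj: "inj_on v ?L"
    using v by (metis inj_onI inner_eq_zero_iff)
  have "pairwise orthogonal (v ` ?L)"
    using orth unfolding pairwise_def orthogonal_def by blast
  moreover have "0 \<notin> v ` ?L"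
    using v by auto
  ultimately have "finite (v ` ?L)"
    using pairwise_orthogonal_independent independent_imp_finite by blast
  then show ?thesis
    using finite_imageD[OF _ inj] by blast
qed

section \<open>The least eigenvalue\<close>

lemma transpose_adj_matrix: "simple_graph E \<Longrightarrow> transpose (adj_matrix E) = adj_matrix E"
  unfolding simple_graph_def adj_matrix_def transpose_def by (auto simp: vec_eq_iff)

lemma quad_form_adj_matrix: "v \<bullet> (adj_matrix E *v v) = quad_form E (\<lambda>i. v $ i)"
  unfolding inner_vec_def matrix_vector_mult_def adj_matrix_def quad_form_def
  by (auto simp: sum_distrib_left intro!: sum.cong)

lemma eigenvalue_quad_form:
  fixes E :: "'a::finite \<Rightarrow> 'a \<Rightarrow> bool"
  assumes "is_eigenvalue (adj_matrix E) \<mu>"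
  obtains v :: "real^'a" where "\<exists>i. v $ i \<noteq> 0" "quad_form E (\<lambda>i. v $ i) = \<mu> * (\<Sum>i\<in>UNIV. (v $ i)\<^sup>2)"
proof -
  obtain v where v: "v \<noteq> 0" "adj_matrix E *v v = \<mu> *\<^sub>R v"
    using assms unfolding is_eigenvalue_def by blast
  have "quad_form E (\<lambda>i. v $ i) = \<mu> * (v \<bullet> v)"
    using v(2) by (simp flip: quad_form_adj_matrix)
  moreover have "\<exists>i. v $ i \<noteq> 0"
    using v(1) by (simp add: vec_eq_iff)
  ultimately show ?thesis
    using that by (simp add: inner_vec_def power2_eq_square)
qed

lemma eigenvalue_complete_bipartite:
  fixes E :: "'a::finite \<Rightarrow> 'a \<Rightarrow> bool"
  assumes A: "card A = a" "card (- A) = b" "0 < a" "0 < b"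
    and edges: "\<And>u v. E u v \<longleftrightarrow> (u \<in> A) \<noteq> (v \<in> A)"
  shows "is_eigenvalue (adj_matrix E) (- sqrt (a * b))"
proof -
  define x :: "real^'a" where "x = (\<chi> u. if u \<in> A then sqrt b else - sqrt a)"
  have neighbours: "(adj_matrix E *v x) $ u = (\<Sum>w \<in> {w. (u \<in> A) \<noteq> (w \<in> A)}. x $ w)" for u
    unfolding matrix_vector_mult_def adj_matrix_def edges vec_lambda_beta
    by (rule sum.mono_neutral_cong_right) auto
  have "(adj_matrix E *v x) $ u = - sqrt (a * b) * x $ u" for u
  proof (cases "u \<in> A")
    case True
    then have "{w. (u \<in> A) \<noteq> (w \<in> A)} = - A"
      by auto
    then have "(adj_matrix E *v x) $ u = (\<Sum>w \<in> - A. - sqrt a)"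
      unfolding neighbours by (intro sum.cong) (auto simp: x_def)
    then show ?thesis
      using True A(2) by (simp add: x_def real_sqrt_mult)
  next
    case False
    then have "{w. (u \<in> A) \<noteq> (w \<in> A)} = A"
      by auto
    then have "(adj_matrix E *v x) $ u = (\<Sum>w \<in> A. sqrt b)"
      unfolding neighbours by (intro sum.cong) (auto simp: x_def)
    then show ?thesis
      using False A(1) A(3) by (simp add: x_def real_sqrt_mult)
  qed
  then have "adj_matrix E *v x = - sqrt (a * b) *\<^sub>R x"
    by (simp add: vec_eq_iff)
  moreover have "x \<noteq> 0"
    using A unfolding x_def by (auto simp: vec_eq_iff)
  ultimately show ?thesis
    unfolding is_eigenvalue_def by blast
qed

lemma finite_nonempty_eigenvalues_adj_matrix:
  fixes E :: "'a::finite \<Rightarrow> 'a \<Rightarrow> bool"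
  assumes "simple_graph E"
  shows "finite {\<mu>. is_eigenvalue (adj_matrix E) \<mu>}" "{\<mu>. is_eigenvalue (adj_matrix E) \<mu>} \<noteq> {}"
  using finite_eigenvalues_symmetric_matrix symmetric_matrix_has_eigenvalue
    transpose_adj_matrix[OF assms] by auto

lemma least_eig_is_eigenvalue:
  fixes E :: "'a::finite \<Rightarrow> 'a \<Rightarrow> bool"
  assumes "simple_graph E"
  shows "is_eigenvalue (adj_matrix E) (least_eig E)"
  using Min_in[OF finite_nonempty_eigenvalues_adj_matrix[OF assms]] unfolding least_eig_def by simp

lemma least_eig_le:
  fixes E :: "'a::finite \<Rightarrow> 'a \<Rightarrow> bool"
  assumes "simple_graph E" and "is_eigenvalue (adj_matrix E) \<mu>"
  shows "least_eig E \<le> \<mu>"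
  using Min_le[OF finite_nonempty_eigenvalues_adj_matrix(1)[OF assms(1)]] assms(2)
  unfolding least_eig_def by simp

lemma eigenvalue_ge_P3_free:
  fixes E :: "'a::finite \<Rightarrow> 'a \<Rightarrow> bool"
  assumes E: "simple_graph E" and k: "2 \<le> k" and n: "11 * k - 4 \<le> CARD('a)"
    and no_kP3: "\<not> contains_kP3 E k" and \<mu>: "is_eigenvalue (adj_matrix E) \<mu>"
  shows "- sqrt ((k - 1) * (CARD('a) - k + 1)) \<le> \<mu>"
proof -
  obtain v :: "real^'a" where nonzero: "\<exists>i. v $ i \<noteq> 0"
    and v: "quad_form E (\<lambda>i. v $ i) = \<mu> * (\<Sum>i\<in>UNIV. (v $ i)\<^sup>2)"
    using eigenvalue_quad_form[OF \<mu>] by blast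
  have "- sqrt ((k - 1) * (CARD('a) - k + 1)) * (\<Sum>i\<in>UNIV. (v $ i)\<^sup>2) \<le> quad_form E (\<lambda>i. v $ i)"
    using E card_pos_neg_edges_P3_free[OF E k n no_kP3]
    by (intro quad_form_lower_bound) (auto simp: simple_graph_def)
  then have "- sqrt ((k - 1) * (CARD('a) - k + 1)) * (\<Sum>i\<in>UNIV. (v $ i)\<^sup>2) \<le> \<mu> * (\<Sum>i\<in>UNIV. (v $ i)\<^sup>2)"
    unfolding v .
  moreover have "0 < (\<Sum>i\<in>UNIV. (v $ i)\<^sup>2)"
    using nonzero by (auto intro: sum_pos2)
  ultimately show ?thesis
    by (rule mult_right_le_imp_le)
qed

lemma is_Kab_if_eigenvalue_P3_free:
  fixes E :: "'a::finite \<Rightarrow> 'a \<Rightarrow> bool"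
  assumes E: "simple_graph E" and k: "2 \<le> k" and n: "11 * k - 4 \<le> CARD('a)"
    and no_kP3: "\<not> contains_kP3 E k"
    and eigenvalue: "is_eigenvalue (adj_matrix E) (- sqrt ((k - 1) * (CARD('a) - k + 1)))"
  shows "is_Kab E (k - 1) (CARD('a) - k + 1)"
proof -
  let ?M = "(k - 1) * (CARD('a) - k + 1)"
  obtain v :: "real^'a" where nonzero: "\<exists>i. v $ i \<noteq> 0"
    and v: "quad_form E (\<lambda>i. v $ i) = - sqrt ?M * (\<Sum>i\<in>UNIV. (v $ i)\<^sup>2)"
    using eigenvalue_quad_form[OF eigenvalue] by blast
  have sym: "\<And>u w. E u w \<Longrightarrow> E w u" and "0 < ?M"
    using E k unfolding simple_graph_def by auto
  note extremal = quad_form_eq_lower_boundD[OF sym card_pos_neg_edges_P3_free[OF E k n no_kP3] \<open>0 < ?M\<close> nonzero v]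
  show ?thesis
    using is_Kab_if_extremal[OF E k n no_kP3 extremal(2) extremal(1) extremal(3)] by blast
qed

lemma eigenvalue_if_is_Kab:
  fixes E :: "'a::finite \<Rightarrow> 'a \<Rightarrow> bool"
  assumes "2 \<le> k" and "is_Kab E (k - 1) (CARD('a) - k + 1)"
  shows "is_eigenvalue (adj_matrix E) (- sqrt ((k - 1) * (CARD('a) - k + 1)))"
  using assms eigenvalue_complete_bipartite[of _ "k - 1" "CARD('a) - k + 1" E]
  unfolding is_Kab_iff_partition by auto

theorem mainTheorem4:
  fixes E :: "'a::finite \<Rightarrow> 'a \<Rightarrow> bool" and k :: nat
  assumes "simple_graph E"
    and "k \<ge> 2"
    and "CARD('a) \<ge> 11 * k - 4"
    and "\<not> contains_kP3 E k"
  shows "least_eig E \<ge> - sqrt (real ((k - 1) * (CARD('a) - k + 1)))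
    \<and> (least_eig E = - sqrt (real ((k - 1) * (CARD('a) - k + 1)))
         \<longleftrightarrow> is_Kab E (k - 1) (CARD('a) - k + 1))"
proof -
  let ?s = "sqrt (real ((k - 1) * (CARD('a) - k + 1)))"
  have lower: "- ?s \<le> least_eig E"
    using eigenvalue_ge_P3_free[OF assms least_eig_is_eigenvalue[OF assms(1)]] .
  have "least_eig E = - ?s \<longleftrightarrow> is_Kab E (k - 1) (CARD('a) - k + 1)"
  proof
    assume "least_eig E = - ?s"
    then show "is_Kab E (k - 1) (CARD('a) - k + 1)"
      using is_Kab_if_eigenvalue_P3_free[OF assms] least_eig_is_eigenvalue[OF assms(1)] by simp
  next
    assume "is_Kab E (k - 1) (CARD('a) - k + 1)"
    then have "least_eig E \<le> - ?s"
      using least_eig_le[OF assms(1) eigenvalue_if_is_Kab[OF assms(2)]] by blast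
    then show "least_eig E = - ?s"
      using lower by simp
  qed
  with lower show ?thesis
    by blast
qed

end
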